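(* Suppose $V \models \mathsf{ZFC}^- + \mathsf{DC}_{<\mathrm{Ord}}$. Then for any proper class $\mathcal{C}$ definable over $V$ and any non-zero ordinal $\gamma$, there is a definable surjection of $\mathcal{C}$ onto $\gamma$.
   Context: $\mathsf{ZFC}^-$ denotes the theory with axioms Empty Set, Extensionality, Pairing, Union, Infinity, the Foundation, Separation, Replacement and Collection Schemes, and the Well-Ordering Principle (no Power Set). $\mathsf{ZFC}^- + \mathsf{DC}_{<\mathrm{Ord}}$ is $\mathsf{ZFC}^-$ together with the $\mathsf{DC}_\mu$-Scheme for every infinite cardinal $\mu$, where the $\mathsf{DC}_\mu$-Scheme states: for all formulas $\varphi,\psi$ and sets $u,w$, if there is $y$ with $\psi(y,u)$ and for every $\alpha < \mu$ and every sequence $s = \langle x_\beta : \beta < \alpha\rangle$ with $\psi(x_\beta,u)$ for all $\beta$ there is $z$ with $\psi(z,u)$ and $\varphi(s,z,w)$, then there is a function $f$ with domain $\mu$ such that for each $\alpha < \mu$, $\psi(f(\alpha),u)$ and $\varphi(f\restriction\alpha, f(\alpha), w)$. *)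

theory Defs
  imports Main
begin

section \<open>First-order language of set theory (deep embedding)\<close>

text \<open>Formulas of the language {\<in>} with named variables (natural numbers).
  A structure is a type 'a together with a binary relation E (membership).\<close>

datatype fm = FMem nat nat | FEq nat nat | FNeg fm | FConj fm fm | FEx nat fm

fun sat :: "('a \<Rightarrow> 'a \<Rightarrow> bool) \<Rightarrow> (nat \<Rightarrow> 'a) \<Rightarrow> fm \<Rightarrow> bool" where
  "sat E s (FMem i j) = E (s i) (s j)"
| "sat E s (FEq i j) = (s i = s j)"
| "sat E s (FNeg p) = (\<not> sat E s p)"
| "sat E s (FConj p q) = (sat E s p \<and> sat E s q)"
| "sat E s (FEx x p) = (\<exists>a. sat E (s(x := a)) p)"

text \<open>The class defined by formula p with parameters given by assignment s
  (variable 0 is the free variable of the class).\<close>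
definition defcl :: "('a \<Rightarrow> 'a \<Rightarrow> bool) \<Rightarrow> fm \<Rightarrow> (nat \<Rightarrow> 'a) \<Rightarrow> 'a set" where
  "defcl E p s = {a. sat E (s(0 := a)) p}"

definition is_set_cl :: "('a \<Rightarrow> 'a \<Rightarrow> bool) \<Rightarrow> 'a set \<Rightarrow> bool" where
  "is_set_cl E C \<longleftrightarrow> (\<exists>b. \<forall>x. x \<in> C \<longleftrightarrow> E x b)"

definition proper_class :: "('a \<Rightarrow> 'a \<Rightarrow> bool) \<Rightarrow> 'a set \<Rightarrow> bool" where
  "proper_class E C \<longleftrightarrow> \<not> is_set_cl E C"

definition is_empty :: "('a \<Rightarrow> 'a \<Rightarrow> bool) \<Rightarrow> 'a \<Rightarrow> bool" where
  "is_empty E e \<longleftrightarrow> (\<forall>z. \<not> E z e)"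

definition subset_in :: "('a \<Rightarrow> 'a \<Rightarrow> bool) \<Rightarrow> 'a \<Rightarrow> 'a \<Rightarrow> bool" where
  "subset_in E y x \<longleftrightarrow> (\<forall>z. E z y \<longrightarrow> E z x)"

definition upair_in :: "('a \<Rightarrow> 'a \<Rightarrow> bool) \<Rightarrow> 'a \<Rightarrow> 'a \<Rightarrow> 'a \<Rightarrow> bool" where
  "upair_in E u a b \<longleftrightarrow> (\<forall>z. E z u \<longleftrightarrow> z = a \<or> z = b)"

definition pair_in :: "('a \<Rightarrow> 'a \<Rightarrow> bool) \<Rightarrow> 'a \<Rightarrow> 'a \<Rightarrow> 'a \<Rightarrow> bool" where
  "pair_in E p a b \<longleftrightarrow> (\<forall>z. E z p \<longleftrightarrow> upair_in E z a a \<or> upair_in E z a b)"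

definition rel_in :: "('a \<Rightarrow> 'a \<Rightarrow> bool) \<Rightarrow> 'a \<Rightarrow> 'a \<Rightarrow> 'a \<Rightarrow> bool" where
  "rel_in E r a b \<longleftrightarrow> (\<exists>p. E p r \<and> pair_in E p a b)"

definition wellorders_in :: "('a \<Rightarrow> 'a \<Rightarrow> bool) \<Rightarrow> 'a \<Rightarrow> 'a \<Rightarrow> bool" where
  "wellorders_in E r x \<longleftrightarrow>
     (\<forall>a. E a x \<longrightarrow> \<not> rel_in E r a a) \<and>
     (\<forall>a b c. E a x \<and> E b x \<and> E c x \<and> rel_in E r a b \<and> rel_in E r b c \<longrightarrow> rel_in E r a c) \<and>
     (\<forall>a b. E a x \<and> E b x \<longrightarrow> rel_in E r a b \<or> a = b \<or> rel_in E r b a) \<and>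
     (\<forall>y. subset_in E y x \<and> (\<exists>z. E z y) \<longrightarrow>
          (\<exists>m. E m y \<and> (\<forall>z. E z y \<longrightarrow> \<not> rel_in E r z m)))"

definition transitive_in :: "('a \<Rightarrow> 'a \<Rightarrow> bool) \<Rightarrow> 'a \<Rightarrow> bool" where
  "transitive_in E x \<longleftrightarrow> (\<forall>y z. E z y \<and> E y x \<longrightarrow> E z x)"

definition ordinal_in :: "('a \<Rightarrow> 'a \<Rightarrow> bool) \<Rightarrow> 'a \<Rightarrow> bool" where
  "ordinal_in E x \<longleftrightarrow> transitive_in E x \<and>
     (\<forall>a. E a x \<longrightarrow> \<not> E a a) \<and>
     (\<forall>a b c. E a x \<and> E b x \<and> E c x \<and> E a b \<and> E b c \<longrightarrow> E a c) \<and>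
     (\<forall>a b. E a x \<and> E b x \<longrightarrow> E a b \<or> a = b \<or> E b a) \<and>
     (\<forall>y. subset_in E y x \<and> (\<exists>z. E z y) \<longrightarrow> (\<exists>m. E m y \<and> (\<forall>z. E z y \<longrightarrow> \<not> E z m)))"

definition succ_in :: "('a \<Rightarrow> 'a \<Rightarrow> bool) \<Rightarrow> 'a \<Rightarrow> 'a \<Rightarrow> bool" where
  "succ_in E y x \<longleftrightarrow> (\<forall>z. E z y \<longleftrightarrow> E z x \<or> z = x)"

definition zero_or_succ_in :: "('a \<Rightarrow> 'a \<Rightarrow> bool) \<Rightarrow> 'a \<Rightarrow> bool" where
  "zero_or_succ_in E x \<longleftrightarrow> is_empty E x \<or> (\<exists>y. succ_in E x y)"

definition nat_in :: "('a \<Rightarrow> 'a \<Rightarrow> bool) \<Rightarrow> 'a \<Rightarrow> bool" where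
  "nat_in E x \<longleftrightarrow> ordinal_in E x \<and> zero_or_succ_in E x \<and> (\<forall>y. E y x \<longrightarrow> zero_or_succ_in E y)"

definition fun_on_in :: "('a \<Rightarrow> 'a \<Rightarrow> bool) \<Rightarrow> 'a \<Rightarrow> 'a \<Rightarrow> bool" where
  "fun_on_in E f d \<longleftrightarrow>
     (\<forall>p. E p f \<longrightarrow> (\<exists>a b. pair_in E p a b \<and> E a d)) \<and>
     (\<forall>a. E a d \<longrightarrow> (\<exists>!b. rel_in E f a b))"

definition bij_in :: "('a \<Rightarrow> 'a \<Rightarrow> bool) \<Rightarrow> 'a \<Rightarrow> 'a \<Rightarrow> 'a \<Rightarrow> bool" where
  "bij_in E f d c \<longleftrightarrow> fun_on_in E f d \<and>
     (\<forall>a a' b. rel_in E f a b \<and> rel_in E f a' b \<longrightarrow> a = a') \<and>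
     (\<forall>a b. rel_in E f a b \<longrightarrow> E b c) \<and>
     (\<forall>b. E b c \<longrightarrow> (\<exists>a. rel_in E f a b))"

definition cardinal_in :: "('a \<Rightarrow> 'a \<Rightarrow> bool) \<Rightarrow> 'a \<Rightarrow> bool" where
  "cardinal_in E m \<longleftrightarrow> ordinal_in E m \<and> (\<forall>b f. E b m \<longrightarrow> \<not> bij_in E f b m)"

definition inf_cardinal_in :: "('a \<Rightarrow> 'a \<Rightarrow> bool) \<Rightarrow> 'a \<Rightarrow> bool" where
  "inf_cardinal_in E m \<longleftrightarrow> cardinal_in E m \<and> \<not> nat_in E m"

definition restr_in :: "('a \<Rightarrow> 'a \<Rightarrow> bool) \<Rightarrow> 'a \<Rightarrow> 'a \<Rightarrow> 'a \<Rightarrow> bool" where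
  "restr_in E g f a \<longleftrightarrow> (\<forall>p. E p g \<longleftrightarrow> E p f \<and> (\<exists>x y. pair_in E p x y \<and> E x a))"

section \<open>Axioms of ZFC^- + DC_{<Ord}, stated semantically (schemes range over all formulas
  and all parameter assignments)\<close>

definition ax_extensionality :: "('a \<Rightarrow> 'a \<Rightarrow> bool) \<Rightarrow> bool" where
  "ax_extensionality E \<longleftrightarrow> (\<forall>x y. (\<forall>z. E z x \<longleftrightarrow> E z y) \<longrightarrow> x = y)"

definition ax_empty :: "('a \<Rightarrow> 'a \<Rightarrow> bool) \<Rightarrow> bool" where
  "ax_empty E \<longleftrightarrow> (\<exists>e. is_empty E e)"

definition ax_pairing :: "('a \<Rightarrow> 'a \<Rightarrow> bool) \<Rightarrow> bool" where
  "ax_pairing E \<longleftrightarrow> (\<forall>a b. \<exists>u. upair_in E u a b)"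

definition ax_union :: "('a \<Rightarrow> 'a \<Rightarrow> bool) \<Rightarrow> bool" where
  "ax_union E \<longleftrightarrow> (\<forall>x. \<exists>u. \<forall>z. E z u \<longleftrightarrow> (\<exists>y. E y x \<and> E z y))"

definition ax_infinity :: "('a \<Rightarrow> 'a \<Rightarrow> bool) \<Rightarrow> bool" where
  "ax_infinity E \<longleftrightarrow> (\<exists>i. (\<exists>e. is_empty E e \<and> E e i) \<and>
                          (\<forall>y. E y i \<longrightarrow> (\<exists>z. succ_in E z y \<and> E z i)))"

definition ax_foundation :: "('a \<Rightarrow> 'a \<Rightarrow> bool) \<Rightarrow> bool" where
  "ax_foundation E \<longleftrightarrow> (\<forall>p s. defcl E p s \<noteq> {} \<longrightarrow>
      (\<exists>y \<in> defcl E p s. \<forall>z \<in> defcl E p s. \<not> E z y))"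

definition ax_separation :: "('a \<Rightarrow> 'a \<Rightarrow> bool) \<Rightarrow> bool" where
  "ax_separation E \<longleftrightarrow> (\<forall>p s a. \<exists>b. \<forall>x. E x b \<longleftrightarrow> E x a \<and> sat E (s(0 := x)) p)"

definition ax_replacement :: "('a \<Rightarrow> 'a \<Rightarrow> bool) \<Rightarrow> bool" where
  "ax_replacement E \<longleftrightarrow> (\<forall>p s a.
     (\<forall>x. E x a \<longrightarrow> (\<exists>!y. sat E (s(0 := x, 1 := y)) p)) \<longrightarrow>
     (\<exists>b. \<forall>y. E y b \<longleftrightarrow> (\<exists>x. E x a \<and> sat E (s(0 := x, 1 := y)) p)))"

definition ax_collection :: "('a \<Rightarrow> 'a \<Rightarrow> bool) \<Rightarrow> bool" where
  "ax_collection E \<longleftrightarrow> (\<forall>p s a.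
     (\<forall>x. E x a \<longrightarrow> (\<exists>y. sat E (s(0 := x, 1 := y)) p)) \<longrightarrow>
     (\<exists>b. \<forall>x. E x a \<longrightarrow> (\<exists>y. E y b \<and> sat E (s(0 := x, 1 := y)) p)))"

definition ax_wellordering :: "('a \<Rightarrow> 'a \<Rightarrow> bool) \<Rightarrow> bool" where
  "ax_wellordering E \<longleftrightarrow> (\<forall>x. \<exists>r. wellorders_in E r x)"

text \<open>DC_mu scheme: psi(y) is the formula p with y at variable 0, phi(s,z) is the formula q
  with s at variable 0 and z at variable 1; the remaining variables are parameters (u, w).\<close>
definition ax_DC :: "('a \<Rightarrow> 'a \<Rightarrow> bool) \<Rightarrow> 'a \<Rightarrow> bool" where
  "ax_DC E \<mu> \<longleftrightarrow> (\<forall>q p t.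
     ((\<exists>y. sat E (t(0 := y)) p) \<and>
      (\<forall>\<alpha> sq. E \<alpha> \<mu> \<and> fun_on_in E sq \<alpha> \<and>
               (\<forall>\<beta> x. E \<beta> \<alpha> \<and> rel_in E sq \<beta> x \<longrightarrow> sat E (t(0 := x)) p) \<longrightarrow>
               (\<exists>z. sat E (t(0 := z)) p \<and> sat E (t(0 := sq, 1 := z)) q)))
     \<longrightarrow> (\<exists>f. fun_on_in E f \<mu> \<and>
            (\<forall>\<alpha> x. E \<alpha> \<mu> \<and> rel_in E f \<alpha> x \<longrightarrow>
               sat E (t(0 := x)) p \<and> (\<exists>g. restr_in E g f \<alpha> \<and> sat E (t(0 := g, 1 := x)) q))))"

definition ZFCm_DC :: "('a \<Rightarrow> 'a \<Rightarrow> bool) \<Rightarrow> bool" where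
  "ZFCm_DC E \<longleftrightarrow> ax_empty E \<and> ax_extensionality E \<and> ax_pairing E \<and> ax_union E \<and>
     ax_infinity E \<and> ax_foundation E \<and> ax_separation E \<and> ax_replacement E \<and>
     ax_collection E \<and> ax_wellordering E \<and> (\<forall>\<mu>. inf_cardinal_in E \<mu> \<longrightarrow> ax_DC E \<mu>)"

text \<open>The class relation defined by q with parameters t (variables 0 and 1 are the
  argument and value) is a surjection of the class C onto the set gamma.\<close>
definition def_surj_onto :: "('a \<Rightarrow> 'a \<Rightarrow> bool) \<Rightarrow> fm \<Rightarrow> (nat \<Rightarrow> 'a) \<Rightarrow> 'a set \<Rightarrow> 'a \<Rightarrow> bool" where
  "def_surj_onto E q t C \<gamma> \<longleftrightarrow>
     (\<forall>a b. sat E (t(0 := a, 1 := b)) q \<longrightarrow> a \<in> C \<and> E b \<gamma>) \<and>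
     (\<forall>a \<in> C. \<exists>!b. sat E (t(0 := a, 1 := b)) q) \<and>
     (\<forall>b. E b \<gamma> \<longrightarrow> (\<exists>a \<in> C. sat E (t(0 := a, 1 := b)) q))"

end

theory Submission
  imports Defs
begin

text \<open>Pick an infinite cardinal \<open>\<mu>\<close> together with a surjection \<open>h\<close> of \<open>\<mu>\<close> onto \<open>\<gamma>\<close>: the least
  ordinal containing \<open>\<omega>\<close> that maps onto \<open>\<gamma>\<close> is a cardinal, because a bijection from a smaller
  ordinal would give either a smaller such ordinal or a surjection of a natural number onto \<open>\<omega>\<close>.
  Since the class \<open>\<C>\<close> is not a set, no set-sized sequence exhausts it, so \<open>DC\<^sub>\<mu>\<close> with the
  step "choose an element of \<open>\<C>\<close> not yet taken" yields an injection \<open>f : \<mu> \<rightarrow> \<C>\<close>.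
  The class map sending \<open>f(\<alpha>)\<close> to \<open>h(\<alpha>)\<close> and everything else in \<open>\<C>\<close> to a fixed element
  of \<open>\<gamma>\<close> is then a definable surjection of \<open>\<C>\<close> onto \<open>\<gamma>\<close>.\<close>

section \<open>Formulas expressing the internal notions\<close>

definition FOr :: "fm \<Rightarrow> fm \<Rightarrow> fm" where "FOr a b = FNeg (FConj (FNeg a) (FNeg b))"
definition FImp :: "fm \<Rightarrow> fm \<Rightarrow> fm" where "FImp a b = FNeg (FConj a (FNeg b))"
definition FAll :: "nat \<Rightarrow> fm \<Rightarrow> fm" where "FAll x a = FNeg (FEx x (FNeg a))"
definition FIff :: "fm \<Rightarrow> fm \<Rightarrow> fm" where "FIff a b = FConj (FImp a b) (FImp b a)"

lemma sat_derived_connectives [simp]: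
  "sat E s (FOr a b) = (sat E s a \<or> sat E s b)"
  "sat E s (FImp a b) = (sat E s a \<longrightarrow> sat E s b)"
  "sat E s (FAll x a) = (\<forall>v. sat E (s(x := v)) a)"
  "sat E s (FIff a b) = (sat E s a \<longleftrightarrow> sat E s b)"
  by (auto simp: FOr_def FImp_def FAll_def FIff_def)

fun max_var :: "fm \<Rightarrow> nat" where
  "max_var (FMem i j) = max i j"
| "max_var (FEq i j) = max i j"
| "max_var (FNeg p) = max_var p"
| "max_var (FConj p q) = max (max_var p) (max_var q)"
| "max_var (FEx x p) = max x (max_var p)"

lemma sat_cong_max_var: "\<forall>v \<le> max_var p. s v = s' v \<Longrightarrow> sat E s p = sat E s' p"
proof (induction p arbitrary: s s')
  case (FEx x p)
  have "sat E (s(x := a)) p = sat E (s'(x := a)) p" for a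
    using FEx.IH FEx.prems by auto
  then show ?case by simp
next
  case (FConj p q)
  then have "sat E s p = sat E s' p" "sat E s q = sat E s' q"
    by auto
  then show ?case by simp
qed auto

text \<open>Frees variable 1 of \<open>\<phi>\<close>, which definable class functions reserve for their value.\<close>
definition subst_var1 :: "nat \<Rightarrow> fm \<Rightarrow> fm" where
  "subst_var1 v \<phi> = FEx 1 (FConj (FEq 1 v) \<phi>)"

lemma sat_subst_var1 [simp]: "v \<noteq> 1 \<Longrightarrow> sat E s (subst_var1 v \<phi>) = sat E (s(1 := s v)) \<phi>"
  by (auto simp: subst_var1_def)

text \<open>The formula encodings below use \<open>fresh\<close> and its successors as bound variables.\<close>
definition fresh :: "nat \<Rightarrow> nat \<Rightarrow> nat \<Rightarrow> nat" where "fresh a b c = Suc (max a (max b c))"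

lemma fresh_neq [simp]:
  "fresh a b c \<noteq> a" "fresh a b c \<noteq> b" "fresh a b c \<noteq> c"
  "a \<noteq> fresh a b c" "b \<noteq> fresh a b c" "c \<noteq> fresh a b c"
  "Suc (fresh a b c) \<noteq> a" "Suc (fresh a b c) \<noteq> b" "Suc (fresh a b c) \<noteq> c"
  "a \<noteq> Suc (fresh a b c)" "b \<noteq> Suc (fresh a b c)" "c \<noteq> Suc (fresh a b c)"
  "Suc (Suc (fresh a b c)) \<noteq> a" "Suc (Suc (fresh a b c)) \<noteq> b" "Suc (Suc (fresh a b c)) \<noteq> c"
  "a \<noteq> Suc (Suc (fresh a b c))" "b \<noteq> Suc (Suc (fresh a b c))" "c \<noteq> Suc (Suc (fresh a b c))"
  "Suc (Suc (Suc (fresh a b c))) \<noteq> a" "a \<noteq> Suc (Suc (Suc (fresh a b c)))"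
  by (auto simp: fresh_def)

definition fm_upair :: "nat \<Rightarrow> nat \<Rightarrow> nat \<Rightarrow> fm" where
  "fm_upair u a b = (let z = fresh u a b in FAll z (FIff (FMem z u) (FOr (FEq z a) (FEq z b))))"

lemma sat_fm_upair [simp]: "sat E s (fm_upair u a b) = upair_in E (s u) (s a) (s b)"
  by (simp add: fm_upair_def Let_def upair_in_def)

definition fm_pair :: "nat \<Rightarrow> nat \<Rightarrow> nat \<Rightarrow> fm" where
  "fm_pair p a b = (let z = fresh p a b in FAll z (FIff (FMem z p) (FOr (fm_upair z a a) (fm_upair z a b))))"

lemma sat_fm_pair [simp]: "sat E s (fm_pair p a b) = pair_in E (s p) (s a) (s b)"
  by (simp add: fm_pair_def Let_def pair_in_def)

definition fm_rel :: "nat \<Rightarrow> nat \<Rightarrow> nat \<Rightarrow> fm" where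
  "fm_rel r a b = (let y = fresh r a b in FEx y (FConj (FMem y r) (fm_pair y a b)))"

lemma sat_fm_rel [simp]: "sat E s (fm_rel r a b) = rel_in E (s r) (s a) (s b)"
  by (simp add: fm_rel_def Let_def rel_in_def)

definition fm_fun_on :: "nat \<Rightarrow> nat \<Rightarrow> fm" where
  "fm_fun_on f d = (let p = fresh f d d; a = Suc p; b = Suc (Suc p) in
     FConj (FAll p (FImp (FMem p f) (FEx a (FEx b (FConj (fm_pair p a b) (FMem a d))))))
           (FAll a (FImp (FMem a d) (FEx b (FConj (fm_rel f a b) (FAll p (FImp (fm_rel f a p) (FEq p b))))))))"

lemma sat_fm_fun_on [simp]: "sat E s (fm_fun_on f d) = fun_on_in E (s f) (s d)"
  unfolding fm_fun_on_def Let_def fun_on_in_def by simp metis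

definition fm_empty :: "nat \<Rightarrow> fm" where
  "fm_empty x = (let z = fresh x x x in FAll z (FNeg (FMem z x)))"

lemma sat_fm_empty [simp]: "sat E s (fm_empty x) = is_empty E (s x)"
  by (simp add: fm_empty_def Let_def is_empty_def)

definition fm_subset :: "nat \<Rightarrow> nat \<Rightarrow> fm" where
  "fm_subset y x = (let z = fresh y x x in FAll z (FImp (FMem z y) (FMem z x)))"

lemma sat_fm_subset [simp]: "sat E s (fm_subset y x) = subset_in E (s y) (s x)"
  by (simp add: fm_subset_def Let_def subset_in_def)

definition fm_succ :: "nat \<Rightarrow> nat \<Rightarrow> fm" where
  "fm_succ y x = (let z = fresh y x x in FAll z (FIff (FMem z y) (FOr (FMem z x) (FEq z x))))"

lemma sat_fm_succ [simp]: "sat E s (fm_succ y x) = succ_in E (s y) (s x)"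
  by (simp add: fm_succ_def Let_def succ_in_def)

definition fm_zero_or_succ :: "nat \<Rightarrow> fm" where
  "fm_zero_or_succ x = (let y = fresh x x x in FOr (fm_empty x) (FEx y (fm_succ x y)))"

lemma sat_fm_zero_or_succ [simp]: "sat E s (fm_zero_or_succ x) = zero_or_succ_in E (s x)"
  by (simp add: fm_zero_or_succ_def Let_def zero_or_succ_in_def)

definition fm_ordinal :: "nat \<Rightarrow> fm" where
  "fm_ordinal x = (let a = fresh x x x; b = Suc a; c = Suc b; y = Suc c in
    FConj (FAll a (FAll b (FImp (FConj (FMem b a) (FMem a x)) (FMem b x))))
    (FConj (FAll a (FImp (FMem a x) (FNeg (FMem a a))))
    (FConj (FAll a (FAll b (FAll c (FImp (FConj (FMem a x) (FConj (FMem b x)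
              (FConj (FMem c x) (FConj (FMem a b) (FMem b c))))) (FMem a c)))))
    (FConj (FAll a (FAll b (FImp (FConj (FMem a x) (FMem b x)) (FOr (FMem a b) (FOr (FEq a b) (FMem b a))))))
     (FAll y (FImp (FConj (fm_subset y x) (FEx a (FMem a y)))
              (FEx b (FConj (FMem b y) (FAll a (FImp (FMem a y) (FNeg (FMem a b))))))))))))"

lemma sat_fm_ordinal [simp]: "sat E s (fm_ordinal x) = ordinal_in E (s x)"
  by (simp add: fm_ordinal_def Let_def ordinal_in_def transitive_in_def)

definition fm_nat :: "nat \<Rightarrow> fm" where
  "fm_nat x = (let y = fresh x x x in
     FConj (fm_ordinal x) (FConj (fm_zero_or_succ x) (FAll y (FImp (FMem y x) (fm_zero_or_succ y)))))"

lemma sat_fm_nat [simp]: "sat E s (fm_nat x) = nat_in E (s x)"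
  by (simp add: fm_nat_def Let_def nat_in_def)

definition surj_in :: "('a \<Rightarrow> 'a \<Rightarrow> bool) \<Rightarrow> 'a \<Rightarrow> 'a \<Rightarrow> 'a \<Rightarrow> bool" where
  "surj_in E f d c \<longleftrightarrow> fun_on_in E f d \<and> (\<forall>a b. rel_in E f a b \<longrightarrow> E b c) \<and>
     (\<forall>b. E b c \<longrightarrow> (\<exists>a. rel_in E f a b))"

definition fm_surj :: "nat \<Rightarrow> nat \<Rightarrow> nat \<Rightarrow> fm" where
  "fm_surj f d c = (let a = fresh f d c; b = Suc a in
     FConj (fm_fun_on f d) (FConj (FAll a (FAll b (FImp (fm_rel f a b) (FMem b c))))
       (FAll b (FImp (FMem b c) (FEx a (fm_rel f a b))))))"

lemma sat_fm_surj [simp]: "sat E s (fm_surj f d c) = surj_in E (s f) (s d) (s c)"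
  by (simp add: fm_surj_def Let_def surj_in_def)

lemma kuratowski_inj: "{{a}, {a, b}} = {{a'}, {a', b'}} \<Longrightarrow> a = a' \<and> b = b'"
  by (metis doubleton_eq_iff insert_absorb2 singleton_insert_inj_eq)

locale zfc_minus_dc =
  fixes E :: "'a \<Rightarrow> 'a \<Rightarrow> bool"
  assumes axioms: "ZFCm_DC E"
begin

lemma extensionality: "(\<And>z. E z x \<longleftrightarrow> E z y) \<Longrightarrow> x = y"
  using axioms unfolding ZFCm_DC_def ax_extensionality_def by blast

lemma separation:
  assumes "\<And>x. sat E (s(0 := x)) \<phi> = P x"
  shows "\<exists>b. \<forall>x. E x b \<longleftrightarrow> E x a \<and> P x"
proof -
  from axioms obtain b where "\<forall>x. E x b \<longleftrightarrow> E x a \<and> sat E (s(0 := x)) \<phi>"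
    unfolding ZFCm_DC_def ax_separation_def by blast
  with assms show ?thesis by auto
qed

lemma foundation:
  assumes "\<And>x. sat E (s(0 := x)) \<phi> = P x" and "P x\<^sub>0"
  shows "\<exists>y. P y \<and> (\<forall>z. P z \<longrightarrow> \<not> E z y)"
proof -
  have "defcl E \<phi> s \<noteq> {}"
    using assms by (auto simp: defcl_def)
  with axioms obtain y where "y \<in> defcl E \<phi> s" "\<forall>z \<in> defcl E \<phi> s. \<not> E z y"
    unfolding ZFCm_DC_def ax_foundation_def by blast
  with assms(1) show ?thesis
    by (auto simp: defcl_def)
qed

lemma replacement:
  assumes "\<And>x y. sat E (s(0 := x, 1 := y)) \<phi> = R x y" and "\<forall>x. E x a \<longrightarrow> (\<exists>!y. R x y)"
  shows "\<exists>b. \<forall>y. E y b \<longleftrightarrow> (\<exists>x. E x a \<and> R x y)"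
proof -
  have "ax_replacement E"
    using axioms unfolding ZFCm_DC_def by blast
  moreover have "\<forall>x. E x a \<longrightarrow> (\<exists>!y. sat E (s(0 := x, 1 := y)) \<phi>)"
    using assms by simp
  ultimately obtain b where "\<forall>y. E y b \<longleftrightarrow> (\<exists>x. E x a \<and> sat E (s(0 := x, 1 := y)) \<phi>)"
    unfolding ax_replacement_def by blast
  with assms(1) show ?thesis by auto
qed

lemma union_ex: "\<exists>u. \<forall>z. E z u \<longleftrightarrow> (\<exists>y. E y x \<and> E z y)"
  using axioms unfolding ZFCm_DC_def ax_union_def by blast

lemma empty_ex: "\<exists>e. is_empty E e"
  using axioms unfolding ZFCm_DC_def ax_empty_def by blast

lemma upair_ex: "\<exists>u. upair_in E u a b"
  using axioms unfolding ZFCm_DC_def ax_pairing_def by blast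

lemma no_mem_self: "\<not> E a a"
proof
  assume "E a a"
  moreover obtain m where "m = a" "\<forall>z. z = a \<longrightarrow> \<not> E z m"
    using foundation[where s = "\<lambda>_. a" and \<phi> = "FEq 0 1" and P = "\<lambda>z. z = a"] by auto
  ultimately show False by blast
qed

lemma mem_minimal: "E z y \<Longrightarrow> \<exists>m. E m y \<and> (\<forall>z. E z y \<longrightarrow> \<not> E z m)"
  using foundation[where s = "\<lambda>_. y" and \<phi> = "FMem 0 1" and P = "\<lambda>z. E z y"] by auto

lemma empty_unique: "is_empty E a \<Longrightarrow> is_empty E b \<Longrightarrow> a = b"
  by (rule extensionality) (auto simp: is_empty_def)

lemma succ_unique: "succ_in E y x \<Longrightarrow> succ_in E y' x \<Longrightarrow> y = y'"
  by (rule extensionality) (auto simp: succ_in_def)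

lemma upair_unique: "upair_in E u a b \<Longrightarrow> upair_in E u' a b \<Longrightarrow> u = u'"
  by (rule extensionality) (auto simp: upair_in_def)

lemma succ_ex: "\<exists>y. succ_in E y x"
proof -
  obtain u where u: "upair_in E u x x" using upair_ex by blast
  obtain p where p: "upair_in E p x u" using upair_ex by blast
  obtain y where y: "\<forall>z. E z y \<longleftrightarrow> (\<exists>v. E v p \<and> E z v)" using union_ex by blast
  have "E z y \<longleftrightarrow> E z x \<or> z = x" for z
  proof -
    have "E z y \<longleftrightarrow> (\<exists>v. (v = x \<or> v = u) \<and> E z v)"
      using y p unfolding upair_in_def by blast
    also have "\<dots> \<longleftrightarrow> E z x \<or> z = x"
      using u unfolding upair_in_def by blast
    finally show ?thesis .
  qed
  then show ?thesis
    unfolding succ_in_def by blast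
qed

lemma pair_ex: "\<exists>p. pair_in E p a b"
proof -
  obtain u where u: "upair_in E u a a" using upair_ex by blast
  obtain v where v: "upair_in E v a b" using upair_ex by blast
  obtain p where p: "upair_in E p u v" using upair_ex by blast
  have "pair_in E p a b"
    unfolding pair_in_def
  proof
    fix z
    show "E z p \<longleftrightarrow> upair_in E z a a \<or> upair_in E z a b"
      using p u v upair_unique unfolding upair_in_def[of E p] by metis
  qed
  then show ?thesis by blast
qed

lemma pair_unique: "pair_in E p a b \<Longrightarrow> pair_in E p' a b \<Longrightarrow> p = p'"
  by (rule extensionality) (auto simp: pair_in_def)

lemma pair_in_members:
  assumes "pair_in E p a b"
  shows "(\<lambda>z. {w. E w z}) ` {z. E z p} = {{a}, {a, b}}"
proof -
  obtain u where u: "upair_in E u a a" using upair_ex by blast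
  obtain v where v: "upair_in E v a b" using upair_ex by blast
  have "E u p" "E v p"
    using assms u v by (auto simp: pair_in_def)
  moreover have "{w. E w u} = {a}" "{w. E w v} = {a, b}"
    using u v by (auto simp: upair_in_def)
  moreover have "\<And>z. E z p \<Longrightarrow> {w. E w z} = {a} \<or> {w. E w z} = {a, b}"
    using assms by (auto simp: pair_in_def upair_in_def)
  ultimately show ?thesis by blast
qed

lemma pair_inj: "pair_in E p a b \<Longrightarrow> pair_in E p a' b' \<Longrightarrow> a = a' \<and> b = b'"
  using pair_in_members[of p a b] pair_in_members[of p a' b'] kuratowski_inj by metis

lemma rel_in_dom: "fun_on_in E f d \<Longrightarrow> rel_in E f a b \<Longrightarrow> E a d"
  unfolding fun_on_in_def rel_in_def using pair_inj by metis

lemma fun_on_in_value: "fun_on_in E f d \<Longrightarrow> E a d \<Longrightarrow> \<exists>b. rel_in E f a b"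
  unfolding fun_on_in_def by blast

lemma fun_on_in_unique: "fun_on_in E f d \<Longrightarrow> rel_in E f a b \<Longrightarrow> rel_in E f a b' \<Longrightarrow> b = b'"
  using rel_in_dom unfolding fun_on_in_def by metis

section \<open>Ordinals and natural numbers\<close>

lemma ordinal_trans: "ordinal_in E x \<Longrightarrow> E z y \<Longrightarrow> E y x \<Longrightarrow> E z x"
  unfolding ordinal_in_def transitive_in_def by blast

lemma ordinal_linear: "ordinal_in E x \<Longrightarrow> E a x \<Longrightarrow> E b x \<Longrightarrow> E a b \<or> a = b \<or> E b a"
  unfolding ordinal_in_def by blast

text \<open>Under Foundation, irreflexivity and well-foundedness of \<open>\<in>\<close> on \<open>x\<close> come for free.\<close>
lemma ordinalI:
  assumes "transitive_in E x"
    and "\<forall>a b c. E a x \<and> E b x \<and> E c x \<and> E a b \<and> E b c \<longrightarrow> E a c"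
    and "\<forall>a b. E a x \<and> E b x \<longrightarrow> E a b \<or> a = b \<or> E b a"
  shows "ordinal_in E x"
  unfolding ordinal_in_def using assms no_mem_self mem_minimal by blast

lemma ordinal_mem_trans:
  "ordinal_in E x \<Longrightarrow> E a x \<Longrightarrow> E b x \<Longrightarrow> E c x \<Longrightarrow> E a b \<Longrightarrow> E b c \<Longrightarrow> E a c"
  unfolding ordinal_in_def by blast

lemma ordinal_mem:
  assumes x: "ordinal_in E x" and "E y x"
  shows "ordinal_in E y"
proof (rule ordinalI)
  have sub: "E z y \<Longrightarrow> E z x" for z
    using assms ordinal_trans by blast
  show "transitive_in E y"
    unfolding transitive_in_def
    using ordinal_mem_trans[OF x] ordinal_trans[OF x] sub \<open>E y x\<close> by blast
  show "\<forall>a b c. E a y \<and> E b y \<and> E c y \<and> E a b \<and> E b c \<longrightarrow> E a c"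
    using ordinal_mem_trans[OF x] sub by blast
  show "\<forall>a b. E a y \<and> E b y \<longrightarrow> E a b \<or> a = b \<or> E b a"
    using ordinal_linear[OF x] sub by blast
qed

lemma ordinal_mem_of_transitive_subset:
  assumes d: "ordinal_in E d" and x: "transitive_in E x" "\<And>z. E z x \<Longrightarrow> E z d" "x \<noteq> d"
  shows "E x d"
proof -
  obtain D where D: "\<forall>z. E z D \<longleftrightarrow> E z d \<and> \<not> E z x"
    using separation[where s = "\<lambda>_. x" and \<phi> = "FNeg (FMem 0 1)" and P = "\<lambda>z. \<not> E z x"] by auto
  have "\<exists>z. E z D"
  proof (rule ccontr)
    assume "\<not> ?thesis"
    then have "\<And>z. E z x \<longleftrightarrow> E z d"
      using D x by blast
    then show False
      using extensionality x by blast
  qed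
  then obtain m where m: "E m D" "\<forall>z. E z D \<longrightarrow> \<not> E z m"
    using mem_minimal by blast
  have "m = x"
  proof (rule extensionality)
    fix w
    show "E w m \<longleftrightarrow> E w x"
    proof
      assume "E w m"
      then show "E w x"
        using m D ordinal_trans[OF d] by blast
    next
      assume w: "E w x"
      then have "E w m \<or> w = m \<or> E m w"
        using ordinal_linear[OF d] m D x by blast
      then show "E w m"
        using m D w x(1) unfolding transitive_in_def by blast
    qed
  qed
  then show ?thesis
    using m D by blast
qed

lemma ordinal_trichotomy:
  assumes a: "ordinal_in E a" and b: "ordinal_in E b"
  shows "E a b \<or> a = b \<or> E b a"
proof -
  obtain I where I: "\<forall>z. E z I \<longleftrightarrow> E z a \<and> E z b"
    using separation[where s = "\<lambda>_. b" and \<phi> = "FMem 0 1" and P = "\<lambda>z. E z b"] by auto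
  have tI: "transitive_in E I"
    unfolding transitive_in_def using I ordinal_trans a b by blast
  have "I = a \<or> E I a" "I = b \<or> E I b"
    using ordinal_mem_of_transitive_subset[OF a tI] ordinal_mem_of_transitive_subset[OF b tI] I
    by blast+
  moreover have "\<not> (E I a \<and> E I b)"
    using I no_mem_self by blast
  ultimately show ?thesis by metis
qed

lemma ordinal_succ:
  assumes x: "ordinal_in E x" and y: "succ_in E y x"
  shows "ordinal_in E y"
proof (rule ordinalI)
  have y_iff: "E z y \<longleftrightarrow> E z x \<or> z = x" for z
    using y by (simp add: succ_in_def)
  show "transitive_in E y"
    unfolding transitive_in_def using y_iff ordinal_trans[OF x] by blast
  show "\<forall>a b c. E a y \<and> E b y \<and> E c y \<and> E a b \<and> E b c \<longrightarrow> E a c"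
  proof (intro allI impI)
    fix a b c
    assume h: "E a y \<and> E b y \<and> E c y \<and> E a b \<and> E b c"
    then consider "E c x" | "c = x"
      using y_iff by blast
    then show "E a c"
    proof cases
      case 1
      then have "E b x" "E a x"
        using h ordinal_trans[OF x] by blast+
      with 1 h show ?thesis
        using ordinal_mem_trans[OF x] by blast
    next
      case 2
      then show ?thesis
        using h ordinal_trans[OF x] by blast
    qed
  qed
  show "\<forall>a b. E a y \<and> E b y \<longrightarrow> E a b \<or> a = b \<or> E b a"
    using y_iff ordinal_linear[OF x] by blast
qed

lemma nat_in_ordinal: "nat_in E x \<Longrightarrow> ordinal_in E x"
  by (simp add: nat_in_def)

lemma nat_in_empty: "is_empty E e \<Longrightarrow> nat_in E e"
proof -
  assume e: "is_empty E e"
  then have "ordinal_in E e"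
    by (intro ordinalI) (auto simp: transitive_in_def is_empty_def)
  with e show ?thesis
    unfolding nat_in_def zero_or_succ_in_def is_empty_def by blast
qed

lemma nat_in_succ: "nat_in E x \<Longrightarrow> succ_in E y x \<Longrightarrow> nat_in E y"
  using ordinal_succ[OF nat_in_ordinal] unfolding nat_in_def zero_or_succ_in_def succ_in_def by blast

lemma nat_in_mem:
  assumes x: "nat_in E x" and "E y x"
  shows "nat_in E y"
  using assms ordinal_mem[OF nat_in_ordinal[OF x]] ordinal_trans[OF nat_in_ordinal[OF x]]
  unfolding nat_in_def by blast

lemma nat_in_induct [consumes 1, case_names zero succ definable]:
  assumes "nat_in E n"
    and zero: "\<And>e. is_empty E e \<Longrightarrow> P e"
    and succ: "\<And>j k. nat_in E j \<Longrightarrow> succ_in E k j \<Longrightarrow> P j \<Longrightarrow> P k"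
    and definable: "\<And>x. sat E (s(0 := x)) \<phi> = P x"
  shows "P n"
proof (rule ccontr)
  assume "\<not> P n"
  then obtain m where m: "nat_in E m" "\<not> P m" and min: "\<forall>z. nat_in E z \<and> \<not> P z \<longrightarrow> \<not> E z m"
    using foundation[where s = s and \<phi> = "FConj (fm_nat 0) (FNeg \<phi>)" and P = "\<lambda>z. nat_in E z \<and> \<not> P z"
        and x\<^sub>0 = n]
      \<open>nat_in E n\<close> definable by auto
  then have "is_empty E m \<or> (\<exists>j. succ_in E m j)"
    unfolding nat_in_def zero_or_succ_in_def by blast
  then show False
  proof (elim disjE exE)
    assume "is_empty E m"
    with zero m show False by blast
  next
    fix j
    assume j: "succ_in E m j"
    then have "E j m"
      by (simp add: succ_in_def)
    with m min have "nat_in E j" "P j"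
      using nat_in_mem by blast+
    with succ j m show False by blast
  qed
qed

lemma omega_ex: "\<exists>w. \<forall>x. E x w \<longleftrightarrow> nat_in E x"
proof -
  obtain i where i0: "\<exists>e. is_empty E e \<and> E e i" and iS: "\<forall>y. E y i \<longrightarrow> (\<exists>z. succ_in E z y \<and> E z i)"
    using axioms unfolding ZFCm_DC_def ax_infinity_def by blast
  have "E n i" if "nat_in E n" for n
    using that
  proof (induction rule: nat_in_induct[where s = "\<lambda>_. i" and \<phi> = "FMem 0 1"])
    case (zero e)
    then show ?case using i0 empty_unique by blast
  next
    case (succ j k)
    then show ?case using iS succ_unique by blast
  qed simp
  moreover obtain w where "\<forall>x. E x w \<longleftrightarrow> E x i \<and> nat_in E x"
    using separation[where s = "\<lambda>_. i" and \<phi> = "fm_nat 0" and P = "nat_in E"] by auto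
  ultimately show ?thesis by blast
qed

definition omega :: 'a where
  "omega = (SOME w. \<forall>x. E x w \<longleftrightarrow> nat_in E x)"

lemma mem_omega_iff: "E x omega \<longleftrightarrow> nat_in E x"
  unfolding omega_def using someI_ex[OF omega_ex] by blast

lemma omega_ordinal: "ordinal_in E omega"
proof (rule ordinalI)
  show "transitive_in E omega"
    unfolding transitive_in_def using mem_omega_iff nat_in_mem by blast
  show "\<forall>a b c. E a omega \<and> E b omega \<and> E c omega \<and> E a b \<and> E b c \<longrightarrow> E a c"
    using mem_omega_iff nat_in_ordinal ordinal_trans by blast
  show "\<forall>a b. E a omega \<and> E b omega \<longrightarrow> E a b \<or> a = b \<or> E b a"
    using mem_omega_iff nat_in_ordinal ordinal_trichotomy by blast
qed

lemma ordinal_nat_or_omega_subset: "ordinal_in E b \<Longrightarrow> nat_in E b \<or> subset_in E omega b"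
  using ordinal_trichotomy[OF _ omega_ordinal] mem_omega_iff ordinal_trans[of b]
  unfolding subset_in_def by blast

section \<open>Definable functions and surjections\<close>

lemma fun_on_in_ex:
  assumes R: "\<And>x y. sat E (s(0 := x, 1 := y)) \<phi> = R x y"
    and unique: "\<And>x. E x d \<Longrightarrow> \<exists>!y. R x y"
  shows "\<exists>G. fun_on_in E G d \<and> (\<forall>x y. rel_in E G x y \<longleftrightarrow> E x d \<and> R x y)"
proof -
  define v where "v = Suc (Suc (max_var \<phi>))"
  define \<chi> where "\<chi> = FEx v (FConj (fm_pair 1 0 v) (subst_var1 v \<phi>))"
  have "sat E (s(0 := x, 1 := p, v := y, 1 := y)) \<phi> = sat E (s(0 := x, 1 := y)) \<phi>" for x p y
    by (rule sat_cong_max_var) (simp add: v_def)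
  then have \<chi>: "sat E (s(0 := x, 1 := p)) \<chi> = (\<exists>y. pair_in E p x y \<and> R x y)" for x p
    using R by (simp add: \<chi>_def v_def)
  have "\<exists>!p. \<exists>y. pair_in E p x y \<and> R x y" if x: "E x d" for x
  proof -
    obtain y where y: "R x y" "\<And>y'. R x y' \<Longrightarrow> y' = y"
      using unique[OF x] by blast
    obtain p where "pair_in E p x y"
      using pair_ex by blast
    with y pair_unique show ?thesis by blast
  qed
  then obtain G where G: "\<forall>p. E p G \<longleftrightarrow> (\<exists>x. E x d \<and> (\<exists>y. pair_in E p x y \<and> R x y))"
    using replacement[where \<phi> = \<chi>, OF \<chi>] by blast
  have rel: "rel_in E G x y \<longleftrightarrow> E x d \<and> R x y" for x y
  proof
    assume "rel_in E G x y"
    then obtain p where "E p G" "pair_in E p x y"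
      unfolding rel_in_def by blast
    with G pair_inj show "E x d \<and> R x y" by metis
  next
    assume "E x d \<and> R x y"
    moreover obtain p where "pair_in E p x y"
      using pair_ex by blast
    ultimately show "rel_in E G x y"
      using G unfolding rel_in_def by blast
  qed
  have "fun_on_in E G d"
    unfolding fun_on_in_def
  proof (intro conjI allI impI)
    fix p
    assume "E p G"
    then show "\<exists>x y. pair_in E p x y \<and> E x d"
      using G by blast
  next
    fix x
    assume "E x d"
    then show "\<exists>!y. rel_in E G x y"
      using rel unique by blast
  qed
  with rel show ?thesis by blast
qed

lemma restr_in_ex: "\<exists>g. restr_in E g f a"
  using separation[where s = "\<lambda>_. a" and \<phi> = "FEx 2 (FEx 3 (FConj (fm_pair 0 2 3) (FMem 2 1)))"
      and P = "\<lambda>p. \<exists>x y. pair_in E p x y \<and> E x a" and a = f]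
  unfolding restr_in_def by auto

lemma rel_in_restr: "restr_in E g f a \<Longrightarrow> rel_in E g x y \<longleftrightarrow> rel_in E f x y \<and> E x a"
  unfolding restr_in_def rel_in_def using pair_inj by blast

lemma fun_on_in_restr:
  assumes f: "fun_on_in E f d" and g: "restr_in E g f a" and a: "\<And>z. E z a \<Longrightarrow> E z d"
  shows "fun_on_in E g a"
  unfolding fun_on_in_def
proof (intro conjI allI impI)
  fix p
  assume "E p g"
  then show "\<exists>x y. pair_in E p x y \<and> E x a"
    using g unfolding restr_in_def by blast
next
  fix x
  assume "E x a"
  then show "\<exists>!y. rel_in E g x y"
    using rel_in_restr[OF g] fun_on_in_value[OF f a] fun_on_in_unique[OF f] by metis
qed

lemma surj_in_id: "\<exists>I. surj_in E I d d"
proof -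
  have "\<exists>I. fun_on_in E I d \<and> (\<forall>x y. rel_in E I x y \<longleftrightarrow> E x d \<and> y = x)"
    using fun_on_in_ex[where \<phi> = "FEq 1 0" and s = "\<lambda>_. d" and R = "\<lambda>x y. y = x" and d = d]
    by simp
  then obtain I where I: "fun_on_in E I d" "\<And>x y. rel_in E I x y \<longleftrightarrow> E x d \<and> y = x"
    by blast
  then have "surj_in E I d d"
    unfolding surj_in_def by auto
  then show ?thesis ..
qed

lemma surj_in_comp:
  assumes F: "surj_in E F b m" and h: "surj_in E h m c"
  shows "\<exists>G. surj_in E G b c"
proof -
  have F_fun: "fun_on_in E F b" and h_fun: "fun_on_in E h m"
    using F h unfolding surj_in_def by blast+
  have "\<exists>!y. \<exists>z. rel_in E F x z \<and> rel_in E h z y" if x: "E x b" for x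
  proof -
    obtain z where z: "rel_in E F x z"
      using fun_on_in_value[OF F_fun x] by blast
    then have "E z m"
      using F unfolding surj_in_def by blast
    then obtain y where "rel_in E h z y"
      using fun_on_in_value[OF h_fun] by blast
    with z show ?thesis
      using fun_on_in_unique[OF F_fun] fun_on_in_unique[OF h_fun] by blast
  qed
  then obtain G where G: "fun_on_in E G b" "\<forall>x y. rel_in E G x y \<longleftrightarrow> E x b \<and> (\<exists>z. rel_in E F x z \<and> rel_in E h z y)"
    using fun_on_in_ex[where s = "(\<lambda>_. F)(3 := h)" and \<phi> = "FEx 5 (FConj (fm_rel 2 0 5) (fm_rel 3 5 1))"
        and d = b and R = "\<lambda>x y. \<exists>z. rel_in E F x z \<and> rel_in E h z y"]
    by auto
  have "E y c" if "rel_in E G x y" for x y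
    using that G h unfolding surj_in_def by blast
  moreover have "\<exists>x. rel_in E G x y" if y: "E y c" for y
  proof -
    obtain z where z: "rel_in E h z y"
      using y h unfolding surj_in_def by blast
    then obtain x where "rel_in E F x z"
      using F h_fun rel_in_dom unfolding surj_in_def by blast
    with z G F_fun rel_in_dom show ?thesis by blast
  qed
  ultimately have "surj_in E G b c"
    using G unfolding surj_in_def by blast
  then show ?thesis ..
qed

lemma surj_in_onto_subset:
  assumes F: "surj_in E F b c" and c': "subset_in E c' c" and e: "E e c'"
  shows "\<exists>G. surj_in E G b c'"
proof -
  let ?R = "\<lambda>x y. \<exists>z. rel_in E F x z \<and> (E z c' \<and> y = z \<or> \<not> E z c' \<and> y = e)"
  have F_fun: "fun_on_in E F b"
    using F unfolding surj_in_def by blast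
  have "\<exists>!y. ?R x y" if x: "E x b" for x
  proof -
    obtain z where "rel_in E F x z"
      using fun_on_in_value[OF F_fun x] by blast
    with fun_on_in_unique[OF F_fun] show ?thesis by blast
  qed
  then obtain G where G: "fun_on_in E G b" "\<forall>x y. rel_in E G x y \<longleftrightarrow> E x b \<and> ?R x y"
    using fun_on_in_ex[where s = "(\<lambda>_. F)(3 := c', 4 := e)" and R = ?R and d = b
        and \<phi> = "FEx 5 (FConj (fm_rel 2 0 5)
                   (FOr (FConj (FMem 5 3) (FEq 1 5)) (FConj (FNeg (FMem 5 3)) (FEq 1 4))))"]
    by auto
  have "E y c'" if "rel_in E G x y" for x y
    using that G e by blast
  moreover have "\<exists>x. rel_in E G x y" if y: "E y c'" for y
  proof -
    obtain x where "rel_in E F x y"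
      using y c' F unfolding surj_in_def subset_in_def by blast
    with y G F_fun rel_in_dom show ?thesis by blast
  qed
  ultimately have "surj_in E G b c'"
    using G unfolding surj_in_def by blast
  then show ?thesis ..
qed

section \<open>An infinite cardinal mapping onto a given ordinal\<close>

lemma nat_upper_bound:
  assumes m: "nat_in E m" and v: "nat_in E v"
  shows "\<exists>u. nat_in E u \<and> subset_in E m u \<and> E v u"
proof -
  consider "E v m" | "v = m \<or> E m v"
    using ordinal_trichotomy[OF nat_in_ordinal[OF m] nat_in_ordinal[OF v]] by blast
  then show ?thesis
  proof cases
    case 1
    with m show ?thesis
      unfolding subset_in_def by blast
  next
    case 2
    obtain u where u: "succ_in E u v"
      using succ_ex by blast
    have "subset_in E m u"
      using 2 u ordinal_trans[OF nat_in_ordinal[OF v]] unfolding subset_in_def succ_in_def by blast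
    with u v nat_in_succ show ?thesis
      unfolding succ_in_def by blast
  qed
qed

lemma nat_fun_bounded:
  assumes "nat_in E n"
  shows "\<forall>F. fun_on_in E F n \<and> (\<forall>x y. rel_in E F x y \<longrightarrow> nat_in E y) \<longrightarrow>
           (\<exists>m. nat_in E m \<and> (\<forall>x y. rel_in E F x y \<longrightarrow> E y m))"
  using assms
proof (induction rule: nat_in_induct[where s = "\<lambda>_. n" and \<phi> =
      "FAll 2 (FImp (FConj (fm_fun_on 2 0) (FAll 3 (FAll 4 (FImp (fm_rel 2 3 4) (fm_nat 4)))))
                    (FEx 5 (FConj (fm_nat 5) (FAll 3 (FAll 4 (FImp (fm_rel 2 3 4) (FMem 4 5)))))))"])
  case (zero e)
  then show ?case
    using rel_in_dom nat_in_empty unfolding is_empty_def by blast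
next
  case (succ j k)
  show ?case
  proof (intro allI impI, elim conjE)
    fix F
    assume F: "fun_on_in E F k" and F_nat: "\<forall>x y. rel_in E F x y \<longrightarrow> nat_in E y"
    have jk: "E j k" and k_iff: "\<And>x. E x k \<longleftrightarrow> E x j \<or> x = j"
      using succ.hyps(2) unfolding succ_in_def by blast+
    obtain H where H: "restr_in E H F j"
      using restr_in_ex by blast
    have "fun_on_in E H j"
      using fun_on_in_restr[OF F H] k_iff by blast
    moreover have "\<forall>x y. rel_in E H x y \<longrightarrow> nat_in E y"
      using rel_in_restr[OF H] F_nat by blast
    ultimately obtain m where m: "nat_in E m" "\<forall>x y. rel_in E H x y \<longrightarrow> E y m"
      using succ.IH by blast
    obtain v where v: "rel_in E F j v"
      using fun_on_in_value[OF F jk] by blast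
    then obtain u where u: "nat_in E u" "subset_in E m u" "E v u"
      using nat_upper_bound[OF m(1)] F_nat by blast
    have "E y u" if "rel_in E F x y" for x y
    proof -
      have "E x j \<or> x = j"
        using that rel_in_dom[OF F] k_iff by blast
      then show ?thesis
        using that m(2) rel_in_restr[OF H] u v fun_on_in_unique[OF F] unfolding subset_in_def by blast
    qed
    with u show "\<exists>m. nat_in E m \<and> (\<forall>x y. rel_in E F x y \<longrightarrow> E y m)"
      by blast
  qed
qed simp

lemma nat_not_surj_omega:
  assumes "nat_in E n"
  shows "\<not> surj_in E F n omega"
proof
  assume F: "surj_in E F n omega"
  then obtain m where m: "nat_in E m" "\<forall>x y. rel_in E F x y \<longrightarrow> E y m"
    using nat_fun_bounded[OF assms] mem_omega_iff unfolding surj_in_def by blast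
  then obtain x where "rel_in E F x m"
    using F mem_omega_iff unfolding surj_in_def by blast
  with m no_mem_self show False by blast
qed

lemma bij_in_imp_surj_in: "bij_in E F b c \<Longrightarrow> surj_in E F b c"
  unfolding bij_in_def surj_in_def by blast

lemma inf_cardinal_if_least_surj:
  assumes \<mu>: "ordinal_in E \<mu>" "subset_in E omega \<mu>" and h: "surj_in E h \<mu> \<gamma>"
    and least: "\<And>b g. E b \<mu> \<Longrightarrow> subset_in E omega b \<Longrightarrow> \<not> surj_in E g b \<gamma>"
  shows "inf_cardinal_in E \<mu>"
proof -
  have "\<not> nat_in E \<mu>"
    using \<mu>(2) mem_omega_iff no_mem_self unfolding subset_in_def by blast
  moreover have "\<not> bij_in E F b \<mu>" if b: "E b \<mu>" for b F
  proof
    assume "bij_in E F b \<mu>"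
    then have F: "surj_in E F b \<mu>"
      by (rule bij_in_imp_surj_in)
    consider "nat_in E b" | "subset_in E omega b"
      using ordinal_nat_or_omega_subset[OF ordinal_mem[OF \<mu>(1) b]] by blast
    then show False
    proof cases
      case 1
      obtain e where "is_empty E e"
        using empty_ex by blast
      then have "E e omega"
        using nat_in_empty mem_omega_iff by blast
      with F \<mu>(2) obtain G where "surj_in E G b omega"
        using surj_in_onto_subset by blast
      with 1 show False
        using nat_not_surj_omega by blast
    next
      case 2
      with F h b least show False
        using surj_in_comp by blast
    qed
  qed
  ultimately show ?thesis
    using \<mu>(1) unfolding inf_cardinal_in_def cardinal_in_def by blast
qed

lemma inf_cardinal_surj_ex:
  assumes \<gamma>: "ordinal_in E \<gamma>" and b0: "E b0 \<gamma>"
  shows "\<exists>\<mu> h. inf_cardinal_in E \<mu> \<and> surj_in E h \<mu> \<gamma>"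
proof -
  define \<delta> where "\<delta> = (if subset_in E omega \<gamma> then \<gamma> else omega)"
  have "subset_in E \<gamma> omega" if "\<not> subset_in E omega \<gamma>"
    using that ordinal_nat_or_omega_subset[OF \<gamma>] mem_omega_iff ordinal_trans[OF omega_ordinal]
    unfolding subset_in_def by blast
  moreover have "subset_in E x x" for x
    unfolding subset_in_def by blast
  ultimately have \<delta>: "ordinal_in E \<delta>" "subset_in E omega \<delta>" "subset_in E \<gamma> \<delta>"
    using \<gamma> omega_ordinal unfolding \<delta>_def by simp_all
  obtain I where "surj_in E I \<delta> \<delta>"
    using surj_in_id by blast
  then obtain h\<^sub>0 where "surj_in E h\<^sub>0 \<delta> \<gamma>"
    using surj_in_onto_subset \<delta>(3) b0 by blast
  let ?K = "\<lambda>x. ordinal_in E x \<and> subset_in E omega x \<and> (\<exists>h. surj_in E h x \<gamma>)"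
  have "?K \<delta>"
    using \<delta> \<open>surj_in E h\<^sub>0 \<delta> \<gamma>\<close> by blast
  then obtain \<mu> where K\<mu>: "?K \<mu>" and least: "\<forall>z. ?K z \<longrightarrow> \<not> E z \<mu>"
    using foundation[where s = "(\<lambda>_. omega)(2 := \<gamma>)" and P = ?K and x\<^sub>0 = \<delta>
        and \<phi> = "FConj (fm_ordinal 0) (FConj (fm_subset 1 0) (FEx 3 (fm_surj 3 0 2)))"]
    by auto
  then obtain h where h: "surj_in E h \<mu> \<gamma>"
    by blast
  have "inf_cardinal_in E \<mu>"
    using K\<mu> h least ordinal_mem[of \<mu>] by (intro inf_cardinal_if_least_surj) blast+
  with h show ?thesis by blast
qed

section \<open>Dependent choice and the glued surjection\<close>

lemma range_bounded: "\<exists>U. \<forall>a b. rel_in E f a b \<longrightarrow> E b U"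
proof -
  obtain U\<^sub>1 where U\<^sub>1: "\<forall>z. E z U\<^sub>1 \<longleftrightarrow> (\<exists>y. E y f \<and> E z y)"
    using union_ex by blast
  obtain U\<^sub>2 where U\<^sub>2: "\<forall>z. E z U\<^sub>2 \<longleftrightarrow> (\<exists>y. E y U\<^sub>1 \<and> E z y)"
    using union_ex by blast
  have "E b U\<^sub>2" if r: "rel_in E f a b" for a b
  proof -
    obtain p where p: "E p f" "pair_in E p a b"
      using r unfolding rel_in_def by blast
    obtain u where u: "upair_in E u a b"
      using upair_ex by blast
    with p have "E u p" "E b u"
      unfolding pair_in_def upair_in_def by blast+
    with p U\<^sub>1 U\<^sub>2 show ?thesis by blast
  qed
  then show ?thesis by blast
qed

lemma proper_class_not_in_range:
  assumes "proper_class E (defcl E p s)"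
  shows "\<exists>z. sat E (s(0 := z)) p \<and> \<not> (\<exists>\<beta>. rel_in E f \<beta> z)"
proof (rule ccontr)
  assume "\<not> ?thesis"
  moreover obtain U where "\<forall>a b. rel_in E f a b \<longrightarrow> E b U"
    using range_bounded by blast
  ultimately have "\<forall>z. sat E (s(0 := z)) p \<longrightarrow> E z U"
    by blast
  moreover obtain b where "\<forall>x. E x b \<longleftrightarrow> E x U \<and> sat E (s(0 := x)) p"
    using separation[where P = "\<lambda>x. sat E (s(0 := x)) p"] by blast
  ultimately have "is_set_cl E (defcl E p s)"
    unfolding is_set_cl_def defcl_def by blast
  with assms show False
    unfolding proper_class_def by blast
qed

lemma dc_injection:
  assumes C: "proper_class E (defcl E p s)" and \<mu>: "inf_cardinal_in E \<mu>"
  shows "\<exists>f. fun_on_in E f \<mu> \<and> (\<forall>\<alpha> x. rel_in E f \<alpha> x \<longrightarrow> x \<in> defcl E p s)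
           \<and> (\<forall>\<alpha> \<alpha>' x. rel_in E f \<alpha> x \<and> rel_in E f \<alpha>' x \<longrightarrow> \<alpha> = \<alpha>')"
proof -
  let ?q = "FNeg (FEx 2 (fm_rel 0 2 1))"
  have "ax_DC E \<mu>"
    using axioms \<mu> unfolding ZFCm_DC_def by blast
  moreover have "\<exists>z. sat E (s(0 := z)) p \<and> sat E (s(0 := sq, 1 := z)) ?q" for sq
    using proper_class_not_in_range[OF C] by simp
  ultimately obtain f where f: "fun_on_in E f \<mu>" and DC: "\<forall>\<alpha> x. E \<alpha> \<mu> \<and> rel_in E f \<alpha> x \<longrightarrow>
       sat E (s(0 := x)) p \<and> (\<exists>g. restr_in E g f \<alpha> \<and> sat E (s(0 := g, 1 := x)) ?q)"
    unfolding ax_DC_def by blast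
  have fp: "sat E (s(0 := x)) p \<and> (\<exists>g. restr_in E g f \<alpha> \<and> \<not> (\<exists>\<beta>. rel_in E g \<beta> x))"
    if "rel_in E f \<alpha> x" for \<alpha> x
    using DC[rule_format, OF conjI[OF rel_in_dom[OF f that] that]] by simp
  have not_earlier: "\<not> E \<alpha>' \<alpha>" if x: "rel_in E f \<alpha> x" "rel_in E f \<alpha>' x" for \<alpha> \<alpha>' x
  proof -
    obtain g where "restr_in E g f \<alpha>" "\<not> (\<exists>\<beta>. rel_in E g \<beta> x)"
      using fp[OF x(1)] by blast
    with x(2) show ?thesis
      using rel_in_restr by blast
  qed
  have "ordinal_in E \<mu>"
    using \<mu> unfolding inf_cardinal_in_def cardinal_in_def by blast
  then have "\<alpha> = \<alpha>'" if "rel_in E f \<alpha> x" "rel_in E f \<alpha>' x" for \<alpha> \<alpha>' x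
    using that not_earlier[of \<alpha> x \<alpha>'] not_earlier[of \<alpha>' x \<alpha>] rel_in_dom[OF f] ordinal_linear by blast
  moreover have "x \<in> defcl E p s" if "rel_in E f \<alpha> x" for \<alpha> x
    using fp[OF that] unfolding defcl_def by blast
  ultimately show ?thesis
    using f by blast
qed

lemma def_surj_onto_glue:
  assumes f: "fun_on_in E f \<mu>" "\<And>\<alpha> x. rel_in E f \<alpha> x \<Longrightarrow> x \<in> C"
      "\<And>\<alpha> \<alpha>' x. rel_in E f \<alpha> x \<Longrightarrow> rel_in E f \<alpha>' x \<Longrightarrow> \<alpha> = \<alpha>'"
    and h: "surj_in E h \<mu> \<gamma>" and b0: "E b0 \<gamma>"
    and q: "\<And>a b. sat E (t(0 := a, 1 := b)) q \<longleftrightarrow>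
      a \<in> C \<and> ((\<exists>\<alpha>. rel_in E f \<alpha> a \<and> rel_in E h \<alpha> b) \<or> (\<not> (\<exists>\<alpha>. rel_in E f \<alpha> a) \<and> b = b0))"
  shows "def_surj_onto E q t C \<gamma>"
proof -
  have h_fun: "fun_on_in E h \<mu>"
    using h unfolding surj_in_def by blast
  have "\<exists>!b. sat E (t(0 := a, 1 := b)) q" if a: "a \<in> C" for a
  proof (cases "\<exists>\<alpha>. rel_in E f \<alpha> a")
    case True
    then obtain \<alpha> where \<alpha>: "rel_in E f \<alpha> a"
      by blast
    then obtain b where "rel_in E h \<alpha> b"
      using fun_on_in_value[OF h_fun] rel_in_dom[OF f(1)] by blast
    with a \<alpha> f(3) fun_on_in_unique[OF h_fun] show ?thesis
      unfolding q by blast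
  next
    case False
    with a show ?thesis
      unfolding q by blast
  qed
  moreover have "\<exists>a \<in> C. sat E (t(0 := a, 1 := b)) q" if b: "E b \<gamma>" for b
  proof -
    obtain \<alpha> where \<alpha>: "rel_in E h \<alpha> b"
      using b h unfolding surj_in_def by blast
    then obtain a where "rel_in E f \<alpha> a"
      using fun_on_in_value[OF f(1)] rel_in_dom[OF h_fun] by blast
    with \<alpha> f(2) show ?thesis
      unfolding q by blast
  qed
  moreover have "a \<in> C \<and> E b \<gamma>" if "sat E (t(0 := a, 1 := b)) q" for a b
    using that h b0 unfolding q surj_in_def by blast
  ultimately show ?thesis
    unfolding def_surj_onto_def by blast
qed

end

text \<open>The parameters \<open>f\<close>, \<open>h\<close>, \<open>b0\<close> and the original value of variable 1 are stored in
  variables above those of \<open>p\<close>.\<close>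
lemma glued_relation_definable:
  "\<exists>q t. \<forall>a b. sat E (t(0 := a, 1 := b)) q \<longleftrightarrow> sat E (s(0 := a)) p \<and>
     ((\<exists>\<alpha>. rel_in E f \<alpha> a \<and> rel_in E h \<alpha> b) \<or> (\<not> (\<exists>\<alpha>. rel_in E f \<alpha> a) \<and> b = b0))"
proof -
  define N where "N = Suc (Suc (max_var p))"
  define t where "t = s(N := s 1, N + 1 := f, N + 2 := h, N + 3 := b0)"
  define q where "q = FConj (subst_var1 N p)
    (FOr (FEx (N + 4) (FConj (fm_rel (N + 1) (N + 4) 0) (fm_rel (N + 2) (N + 4) 1)))
         (FConj (FNeg (FEx (N + 4) (fm_rel (N + 1) (N + 4) 0))) (FEq 1 (N + 3))))"
  have "sat E (t(0 := a, 1 := s 1)) p = sat E (s(0 := a)) p" for a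
    by (rule sat_cong_max_var) (auto simp: t_def N_def)
  then have "sat E (t(0 := a, 1 := b)) q \<longleftrightarrow> sat E (s(0 := a)) p \<and>
     ((\<exists>\<alpha>. rel_in E f \<alpha> a \<and> rel_in E h \<alpha> b) \<or> (\<not> (\<exists>\<alpha>. rel_in E f \<alpha> a) \<and> b = b0))" for a b
    by (simp add: q_def t_def N_def)
  then show ?thesis by blast
qed

theorem corollary6p5:
  fixes E :: "'a \<Rightarrow> 'a \<Rightarrow> bool" and p :: fm and s :: "nat \<Rightarrow> 'a" and \<gamma> :: 'a
  assumes "ZFCm_DC E"
    and "proper_class E (defcl E p s)"
    and "ordinal_in E \<gamma>"
    and "\<exists>x. E x \<gamma>"
  shows "\<exists>q t. def_surj_onto E q t (defcl E p s) \<gamma>"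
proof -
  interpret zfc_minus_dc E
    by standard (rule assms(1))
  obtain b0 where b0: "E b0 \<gamma>"
    using assms(4) by blast
  obtain \<mu> h where \<mu>: "inf_cardinal_in E \<mu>" and h: "surj_in E h \<mu> \<gamma>"
    using inf_cardinal_surj_ex[OF assms(3) b0] by blast
  obtain f where f: "fun_on_in E f \<mu>" "\<forall>\<alpha> x. rel_in E f \<alpha> x \<longrightarrow> x \<in> defcl E p s"
      "\<forall>\<alpha> \<alpha>' x. rel_in E f \<alpha> x \<and> rel_in E f \<alpha>' x \<longrightarrow> \<alpha> = \<alpha>'"
    using dc_injection[OF assms(2) \<mu>] by blast
  obtain q t where q: "\<And>a b. sat E (t(0 := a, 1 := b)) q \<longleftrightarrow> a \<in> defcl E p s \<and>
      ((\<exists>\<alpha>. rel_in E f \<alpha> a \<and> rel_in E h \<alpha> b) \<or> (\<not> (\<exists>\<alpha>. rel_in E f \<alpha> a) \<and> b = b0))"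
    using glued_relation_definable[of E s p f h b0] unfolding defcl_def mem_Collect_eq by blast
  have "def_surj_onto E q t (defcl E p s) \<gamma>"
    using def_surj_onto_glue[OF f(1) _ _ h b0 q] f(2,3) by blast
  then show ?thesis by blast
qed

end
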